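(* Let $\mathcal{C}$ be a category that has finite biproducts, and let $X$ be an object of $\mathcal{C}$. Then $X$ is abelian if and only if the diagonal $\Delta \colon X \to X \oplus X$ is a kernel of some split epimorphism.
   Context: A category has finite biproducts if it has a zero object and every pair of objects has a biproduct, i.e. an object $X_1\oplus X_2$ with injections $i_k$ and projections $p_k$ such that $(X_1\oplus X_2,i_1,i_2)$ is a coproduct, $(X_1\oplus X_2,p_1,p_2)$ is a product, $p_k i_k = 1$ and $p_k i_j = 0$ for $j\ne k$. Such a category has a unique enrichment in commutative monoids, where $0$ is the zero morphism and $f+g = \nabla (f\oplus g)\Delta$ (with $\Delta=\begin{bmatrix}1\\1\end{bmatrix}$ the diagonal and $\nabla=\begin{bmatrix}1&1\end{bmatrix}$ the codiagonal). An object $X$ is called abelian if $1\colon X\to X$ has an additive inverse with respect to this enrichment. A kernel of $f\colon Y\to Z$ is an equaliser of $f$ and the zero morphism $0\colon Y\to Z$. *)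

theory Defs
  imports Main
begin

record ('o, 'a) cat =
  Obj :: "'o set"
  Arr :: "'a set"
  Dom :: "'a \<Rightarrow> 'o"
  Cod :: "'a \<Rightarrow> 'o"
  Comp :: "'a \<Rightarrow> 'a \<Rightarrow> 'a"   (* Comp C g f = g \<circ> f, defined when Cod f = Dom g *)
  Id :: "'o \<Rightarrow> 'a"

definition hom :: "('o, 'a) cat \<Rightarrow> 'o \<Rightarrow> 'o \<Rightarrow> 'a set" where
  "hom C a b = {f \<in> Arr C. Dom C f = a \<and> Cod C f = b}"

definition category :: "('o, 'a) cat \<Rightarrow> bool" where
  "category C \<longleftrightarrow>
     (\<forall>f \<in> Arr C. Dom C f \<in> Obj C \<and> Cod C f \<in> Obj C) \<and>
     (\<forall>a \<in> Obj C. Id C a \<in> hom C a a) \<and>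
     (\<forall>f \<in> Arr C. \<forall>g \<in> Arr C. Cod C f = Dom C g \<longrightarrow>
        Comp C g f \<in> hom C (Dom C f) (Cod C g)) \<and>
     (\<forall>f \<in> Arr C. \<forall>g \<in> Arr C. \<forall>h \<in> Arr C. Cod C f = Dom C g \<longrightarrow> Cod C g = Dom C h \<longrightarrow>
        Comp C h (Comp C g f) = Comp C (Comp C h g) f) \<and>
     (\<forall>f \<in> Arr C. Comp C (Id C (Cod C f)) f = f \<and> Comp C f (Id C (Dom C f)) = f)"

definition zero_obj :: "('o, 'a) cat \<Rightarrow> 'o \<Rightarrow> bool" where
  "zero_obj C z \<longleftrightarrow> z \<in> Obj C \<and>
     (\<forall>a \<in> Obj C. (\<exists>!f. f \<in> hom C a z) \<and> (\<exists>!f. f \<in> hom C z a))"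

definition the_zero :: "('o, 'a) cat \<Rightarrow> 'o" where
  "the_zero C = (SOME z. zero_obj C z)"

definition zero_mor :: "('o, 'a) cat \<Rightarrow> 'o \<Rightarrow> 'o \<Rightarrow> 'a" where
  "zero_mor C a b = Comp C (THE f. f \<in> hom C (the_zero C) b) (THE f. f \<in> hom C a (the_zero C))"

definition is_biproduct ::
  "('o, 'a) cat \<Rightarrow> 'o \<Rightarrow> 'o \<Rightarrow> 'o \<Rightarrow> 'a \<Rightarrow> 'a \<Rightarrow> 'a \<Rightarrow> 'a \<Rightarrow> bool" where
  "is_biproduct C x1 x2 s i1 i2 p1 p2 \<longleftrightarrow>
     s \<in> Obj C \<and>
     i1 \<in> hom C x1 s \<and> i2 \<in> hom C x2 s \<and> p1 \<in> hom C s x1 \<and> p2 \<in> hom C s x2 \<and>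
     (\<forall>y \<in> Obj C. \<forall>f1 \<in> hom C x1 y. \<forall>f2 \<in> hom C x2 y.
        \<exists>!h. h \<in> hom C s y \<and> Comp C h i1 = f1 \<and> Comp C h i2 = f2) \<and>
     (\<forall>y \<in> Obj C. \<forall>f1 \<in> hom C y x1. \<forall>f2 \<in> hom C y x2.
        \<exists>!h. h \<in> hom C y s \<and> Comp C p1 h = f1 \<and> Comp C p2 h = f2) \<and>
     Comp C p1 i1 = Id C x1 \<and> Comp C p2 i2 = Id C x2 \<and>
     Comp C p1 i2 = zero_mor C x2 x1 \<and> Comp C p2 i1 = zero_mor C x1 x2"

definition has_finite_biproducts :: "('o, 'a) cat \<Rightarrow> bool" where
  "has_finite_biproducts C \<longleftrightarrow> category C \<and> (\<exists>z. zero_obj C z) \<and>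
     (\<forall>x1 \<in> Obj C. \<forall>x2 \<in> Obj C. \<exists>s i1 i2 p1 p2. is_biproduct C x1 x2 s i1 i2 p1 p2)"

definition bp :: "('o, 'a) cat \<Rightarrow> 'o \<Rightarrow> 'o \<Rightarrow> 'o \<times> 'a \<times> 'a \<times> 'a \<times> 'a" where
  "bp C x1 x2 = (SOME (s, i1, i2, p1, p2). is_biproduct C x1 x2 s i1 i2 p1 p2)"

definition bp_obj :: "('o, 'a) cat \<Rightarrow> 'o \<Rightarrow> 'o \<Rightarrow> 'o" where
  "bp_obj C x1 x2 = fst (bp C x1 x2)"
definition bp_i1 :: "('o, 'a) cat \<Rightarrow> 'o \<Rightarrow> 'o \<Rightarrow> 'a" where
  "bp_i1 C x1 x2 = fst (snd (bp C x1 x2))"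
definition bp_i2 :: "('o, 'a) cat \<Rightarrow> 'o \<Rightarrow> 'o \<Rightarrow> 'a" where
  "bp_i2 C x1 x2 = fst (snd (snd (bp C x1 x2)))"
definition bp_p1 :: "('o, 'a) cat \<Rightarrow> 'o \<Rightarrow> 'o \<Rightarrow> 'a" where
  "bp_p1 C x1 x2 = fst (snd (snd (snd (bp C x1 x2))))"
definition bp_p2 :: "('o, 'a) cat \<Rightarrow> 'o \<Rightarrow> 'o \<Rightarrow> 'a" where
  "bp_p2 C x1 x2 = snd (snd (snd (snd (bp C x1 x2))))"

definition diag :: "('o, 'a) cat \<Rightarrow> 'o \<Rightarrow> 'a" where
  "diag C x = (THE h. h \<in> hom C x (bp_obj C x x) \<and>
      Comp C (bp_p1 C x x) h = Id C x \<and> Comp C (bp_p2 C x x) h = Id C x)"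

definition codiag :: "('o, 'a) cat \<Rightarrow> 'o \<Rightarrow> 'a" where
  "codiag C x = (THE h. h \<in> hom C (bp_obj C x x) x \<and>
      Comp C h (bp_i1 C x x) = Id C x \<and> Comp C h (bp_i2 C x x) = Id C x)"

definition bp_map :: "('o, 'a) cat \<Rightarrow> 'a \<Rightarrow> 'a \<Rightarrow> 'a" where
  "bp_map C f g = (let a1 = Dom C f; a2 = Dom C g; b1 = Cod C f; b2 = Cod C g in
     (THE h. h \<in> hom C (bp_obj C a1 a2) (bp_obj C b1 b2) \<and>
        Comp C (bp_p1 C b1 b2) h = Comp C f (bp_p1 C a1 a2) \<and>
        Comp C (bp_p2 C b1 b2) h = Comp C g (bp_p2 C a1 a2)))"

definition cplus :: "('o, 'a) cat \<Rightarrow> 'a \<Rightarrow> 'a \<Rightarrow> 'a" where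
  "cplus C f g = Comp C (codiag C (Cod C f)) (Comp C (bp_map C f g) (diag C (Dom C f)))"

definition abelian_obj :: "('o, 'a) cat \<Rightarrow> 'o \<Rightarrow> bool" where
  "abelian_obj C x \<longleftrightarrow> x \<in> Obj C \<and>
     (\<exists>g \<in> hom C x x. cplus C g (Id C x) = zero_mor C x x \<and> cplus C (Id C x) g = zero_mor C x x)"

definition is_kernel :: "('o, 'a) cat \<Rightarrow> 'a \<Rightarrow> 'a \<Rightarrow> bool" where
  "is_kernel C k f \<longleftrightarrow> k \<in> Arr C \<and> f \<in> Arr C \<and> Cod C k = Dom C f \<and>
     Comp C f k = Comp C (zero_mor C (Dom C f) (Cod C f)) k \<and>
     (\<forall>w \<in> Obj C. \<forall>m \<in> hom C w (Dom C f).
        Comp C f m = Comp C (zero_mor C (Dom C f) (Cod C f)) m \<longrightarrow>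
        (\<exists>!u. u \<in> hom C w (Dom C k) \<and> Comp C k u = m))"

definition split_epi :: "('o, 'a) cat \<Rightarrow> 'a \<Rightarrow> bool" where
  "split_epi C e \<longleftrightarrow> e \<in> Arr C \<and>
     (\<exists>s \<in> hom C (Cod C e) (Dom C e). Comp C e s = Id C (Cod C e))"

end

theory Submission
  imports Defs
begin

(* If g + 1 = 0, then the diagonal is a kernel of the cotuple [1, g] : X \<oplus> X \<rightarrow> X, which
   is split by the first injection: [1, g] kills <x, y> iff x + g y = 0, iff x = y.
   Conversely, let the diagonal be a kernel of f with f s = 1, and put a = f i1, b = f i2,
   s1 = p1 s, s2 = p2 s. Then a + b = f \<Delta> = 0, a s1 + b s2 = f s = 1, and a x + b y = 0 forces
   x = y. Since a (s1 a) + b (s2 a + 1) = (a s1 + b s2) a + b = 0, we get s1 a = s2 a + 1, so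
   (s2 a + s1 b) + 1 = s1 a + s1 b = s1 (a + b) = 0. *)

locale biproduct_category =
  fixes C :: "('o, 'a) cat"
  assumes has_biproducts: "has_finite_biproducts C"
begin

abbreviation arr_comp (infixr "\<cdot>" 70) where "g \<cdot> f \<equiv> Comp C g f"
abbreviation arr_plus (infixl "+\<^sub>C" 65) where "f +\<^sub>C g \<equiv> cplus C f g"
abbreviation arr_zero ("\<zero>\<^bsub>_,_\<^esub>") where "\<zero>\<^bsub>A,B\<^esub> \<equiv> zero_mor C A B"

lemma category: "category C"
  using has_biproducts unfolding has_finite_biproducts_def by blast

lemma Dom_in_Obj [simp]: "f \<in> Arr C \<Longrightarrow> Dom C f \<in> Obj C"
  and Cod_in_Obj [simp]: "f \<in> Arr C \<Longrightarrow> Cod C f \<in> Obj C"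
  using category unfolding category_def by blast+

lemma in_hom_iff:
  "f \<in> hom C A B \<longleftrightarrow> f \<in> Arr C \<and> Dom C f = A \<and> Cod C f = B \<and> A \<in> Obj C \<and> B \<in> Obj C"
  unfolding hom_def by auto

lemma in_hom_Obj: "f \<in> hom C A B \<Longrightarrow> A \<in> Obj C \<and> B \<in> Obj C"
  by (simp add: in_hom_iff)

lemma comp_in_Arr [simp]: "f \<in> Arr C \<Longrightarrow> g \<in> Arr C \<Longrightarrow> Cod C f = Dom C g \<Longrightarrow> g \<cdot> f \<in> Arr C"
  and Dom_comp [simp]: "f \<in> Arr C \<Longrightarrow> g \<in> Arr C \<Longrightarrow> Cod C f = Dom C g \<Longrightarrow> Dom C (g \<cdot> f) = Dom C f"
  and Cod_comp [simp]: "f \<in> Arr C \<Longrightarrow> g \<in> Arr C \<Longrightarrow> Cod C f = Dom C g \<Longrightarrow> Cod C (g \<cdot> f) = Cod C g"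
  using category unfolding category_def hom_def by auto

lemma comp_in_hom: "f \<in> hom C A B \<Longrightarrow> g \<in> hom C B D \<Longrightarrow> g \<cdot> f \<in> hom C A D"
  unfolding hom_def by simp

text \<open>The simplifier works with f \<in> hom C A B in the unfolded form f \<in> Arr C,
  Dom C f = A, Cod C f = B (typing lemmas are declared [simp] in that form) and keeps composites
  associated to the right, so equations g \<cdot> f = h are also used as g \<cdot> f \<cdot> k = h \<cdot> k.\<close>

lemma comp_assoc [simp]:
  "f \<in> Arr C \<Longrightarrow> g \<in> Arr C \<Longrightarrow> h \<in> Arr C \<Longrightarrow> Cod C f = Dom C g \<Longrightarrow> Cod C g = Dom C h
    \<Longrightarrow> (h \<cdot> g) \<cdot> f = h \<cdot> g \<cdot> f"
  using category unfolding category_def by auto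

lemma comp_eq_comp_right:
  "g \<cdot> f = h \<Longrightarrow> f \<in> Arr C \<Longrightarrow> g \<in> Arr C \<Longrightarrow> k \<in> Arr C \<Longrightarrow> Cod C k = Dom C f
    \<Longrightarrow> Cod C f = Dom C g \<Longrightarrow> g \<cdot> f \<cdot> k = h \<cdot> k"
  by (metis comp_assoc)

lemma Id_in_hom: "A \<in> Obj C \<Longrightarrow> Id C A \<in> hom C A A"
  using category unfolding category_def by auto

declare Id_in_hom [unfolded hom_def, simplified, simp]

lemma comp_Id_left [simp]: "f \<in> Arr C \<Longrightarrow> Cod C f = B \<Longrightarrow> Id C B \<cdot> f = f"
  and comp_Id_right [simp]: "f \<in> Arr C \<Longrightarrow> Dom C f = A \<Longrightarrow> f \<cdot> Id C A = f"
  using category unfolding category_def by auto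

definition to_zero :: "'o \<Rightarrow> 'a" where
  "to_zero A = (THE f. f \<in> hom C A (the_zero C))"

definition from_zero :: "'o \<Rightarrow> 'a" where
  "from_zero A = (THE f. f \<in> hom C (the_zero C) A)"

lemma zero_obj_the_zero: "zero_obj C (the_zero C)"
  using has_biproducts someI_ex[of "zero_obj C"]
  unfolding has_finite_biproducts_def the_zero_def by blast

lemma to_zero_in_hom: "A \<in> Obj C \<Longrightarrow> to_zero A \<in> hom C A (the_zero C)"
  and to_zero_unique: "f \<in> hom C A (the_zero C) \<Longrightarrow> f = to_zero A"
  using zero_obj_the_zero in_hom_Obj unfolding zero_obj_def to_zero_def
  by (metis (no_types, lifting) theI')+

lemma from_zero_in_hom: "A \<in> Obj C \<Longrightarrow> from_zero A \<in> hom C (the_zero C) A"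
  and from_zero_unique: "f \<in> hom C (the_zero C) A \<Longrightarrow> f = from_zero A"
  using zero_obj_the_zero in_hom_Obj unfolding zero_obj_def from_zero_def
  by (metis (no_types, lifting) theI')+

declare to_zero_in_hom [unfolded hom_def, simplified, simp]
  from_zero_in_hom [unfolded hom_def, simplified, simp]

lemma zero_mor_eq: "\<zero>\<^bsub>A,B\<^esub> = from_zero B \<cdot> to_zero A"
  unfolding zero_mor_def from_zero_def to_zero_def ..

lemma zero_mor_in_hom: "A \<in> Obj C \<Longrightarrow> B \<in> Obj C \<Longrightarrow> \<zero>\<^bsub>A,B\<^esub> \<in> hom C A B"
  by (simp add: zero_mor_eq hom_def)

declare zero_mor_in_hom [unfolded hom_def, simplified, simp]

lemma comp_zero_left [simp]:
  assumes "f \<in> Arr C" "Cod C f = B" "D \<in> Obj C"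
  shows "\<zero>\<^bsub>B,D\<^esub> \<cdot> f = \<zero>\<^bsub>Dom C f,D\<^esub>"
proof -
  have "to_zero B \<cdot> f = to_zero (Dom C f)"
    using assms Cod_in_Obj[of f] by (intro to_zero_unique) (simp add: hom_def)
  then show ?thesis
    using assms Cod_in_Obj[of f] by (simp add: zero_mor_eq)
qed

lemma comp_zero_right [simp]:
  assumes "g \<in> Arr C" "Dom C g = B" "A \<in> Obj C"
  shows "g \<cdot> \<zero>\<^bsub>A,B\<^esub> = \<zero>\<^bsub>A,Cod C g\<^esub>"
proof -
  have "g \<cdot> from_zero B = from_zero (Cod C g)"
    using assms Dom_in_Obj[of g] by (intro from_zero_unique) (simp add: hom_def)
  then show ?thesis
    using assms Dom_in_Obj[of g] by (simp add: zero_mor_eq flip: comp_assoc)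
qed

abbreviation bp_obj_syntax (infixl "\<oplus>" 65) where "A \<oplus> B \<equiv> bp_obj C A B"
abbreviation "i1 \<equiv> bp_i1 C"
abbreviation "i2 \<equiv> bp_i2 C"
abbreviation "p1 \<equiv> bp_p1 C"
abbreviation "p2 \<equiv> bp_p2 C"

lemma is_biproduct_bp:
  assumes "A \<in> Obj C" "B \<in> Obj C"
  shows "is_biproduct C A B (A \<oplus> B) (i1 A B) (i2 A B) (p1 A B) (p2 A B)"
proof -
  obtain s j1 j2 q1 q2 where "is_biproduct C A B s j1 j2 q1 q2"
    using has_biproducts assms unfolding has_finite_biproducts_def by blast
  then have "case bp C A B of (s, j1, j2, q1, q2) \<Rightarrow> is_biproduct C A B s j1 j2 q1 q2"
    unfolding bp_def by (rule someI[of "\<lambda>(s, j1, j2, q1, q2). is_biproduct C A B s j1 j2 q1 q2"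
      "(s, j1, j2, q1, q2)", simplified])
  then show ?thesis
    unfolding bp_obj_def bp_i1_def bp_i2_def bp_p1_def bp_p2_def by (simp split: prod.splits)
qed

context
  fixes A B
  assumes A: "A \<in> Obj C" and B: "B \<in> Obj C"
begin

lemma bp_obj_in_Obj: "A \<oplus> B \<in> Obj C"
  and i1_in_hom: "i1 A B \<in> hom C A (A \<oplus> B)"
  and i2_in_hom: "i2 A B \<in> hom C B (A \<oplus> B)"
  and p1_in_hom: "p1 A B \<in> hom C (A \<oplus> B) A"
  and p2_in_hom: "p2 A B \<in> hom C (A \<oplus> B) B"
  and p1_i1: "p1 A B \<cdot> i1 A B = Id C A"
  and p2_i2: "p2 A B \<cdot> i2 A B = Id C B"
  and p1_i2: "p1 A B \<cdot> i2 A B = \<zero>\<^bsub>B,A\<^esub>"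
  and p2_i1: "p2 A B \<cdot> i1 A B = \<zero>\<^bsub>A,B\<^esub>"
  using is_biproduct_bp[OF A B] unfolding is_biproduct_def by blast+

lemma tuple_ex1:
  "f1 \<in> hom C Y A \<Longrightarrow> f2 \<in> hom C Y B \<Longrightarrow>
    \<exists>!h. h \<in> hom C Y (A \<oplus> B) \<and> p1 A B \<cdot> h = f1 \<and> p2 A B \<cdot> h = f2"
  using is_biproduct_bp[OF A B] in_hom_Obj unfolding is_biproduct_def by blast

lemma cotuple_ex1:
  "f1 \<in> hom C A Y \<Longrightarrow> f2 \<in> hom C B Y \<Longrightarrow>
    \<exists>!h. h \<in> hom C (A \<oplus> B) Y \<and> h \<cdot> i1 A B = f1 \<and> h \<cdot> i2 A B = f2"
  using is_biproduct_bp[OF A B] in_hom_Obj unfolding is_biproduct_def by blast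

end

declare bp_obj_in_Obj [simp]
  i1_in_hom [unfolded hom_def, simplified, simp] i2_in_hom [unfolded hom_def, simplified, simp]
  p1_in_hom [unfolded hom_def, simplified, simp] p2_in_hom [unfolded hom_def, simplified, simp]
  p1_i1 [simp] p2_i2 [simp] p1_i2 [simp] p2_i1 [simp]
  p1_i1 [THEN comp_eq_comp_right, simp] p2_i2 [THEN comp_eq_comp_right, simp]
  p1_i2 [THEN comp_eq_comp_right, simp] p2_i1 [THEN comp_eq_comp_right, simp]

lemma tuple_eqI:
  assumes "A \<in> Obj C" "B \<in> Obj C" "h \<in> hom C Y (A \<oplus> B)" "h' \<in> hom C Y (A \<oplus> B)"
    and "p1 A B \<cdot> h = p1 A B \<cdot> h'" "p2 A B \<cdot> h = p2 A B \<cdot> h'"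
  shows "h = h'"
  using tuple_ex1[of A B "p1 A B \<cdot> h" Y "p2 A B \<cdot> h"] assms by (auto simp: in_hom_iff)

lemma cotuple_eqI:
  assumes "A \<in> Obj C" "B \<in> Obj C" "h \<in> hom C (A \<oplus> B) Y" "h' \<in> hom C (A \<oplus> B) Y"
    and "h \<cdot> i1 A B = h' \<cdot> i1 A B" "h \<cdot> i2 A B = h' \<cdot> i2 A B"
  shows "h = h'"
  using cotuple_ex1[of A B "h \<cdot> i1 A B" Y "h \<cdot> i2 A B"] assms by (auto simp: in_hom_iff)

abbreviation diag_syntax ("\<Delta>") where "\<Delta> \<equiv> diag C"
abbreviation codiag_syntax ("\<nabla>") where "\<nabla> \<equiv> codiag C"

lemma diag_in_hom: "X \<in> Obj C \<Longrightarrow> \<Delta> X \<in> hom C X (X \<oplus> X)"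
  and p1_diag: "X \<in> Obj C \<Longrightarrow> p1 X X \<cdot> \<Delta> X = Id C X"
  and p2_diag: "X \<in> Obj C \<Longrightarrow> p2 X X \<cdot> \<Delta> X = Id C X"
  using theI'[OF tuple_ex1[of X X "Id C X" X "Id C X"]] unfolding diag_def
  by (auto simp: in_hom_iff)

lemma codiag_in_hom: "X \<in> Obj C \<Longrightarrow> \<nabla> X \<in> hom C (X \<oplus> X) X"
  and codiag_i1: "X \<in> Obj C \<Longrightarrow> \<nabla> X \<cdot> i1 X X = Id C X"
  and codiag_i2: "X \<in> Obj C \<Longrightarrow> \<nabla> X \<cdot> i2 X X = Id C X"
  using theI'[OF cotuple_ex1[of X X "Id C X" X "Id C X"]] unfolding codiag_def
  by (auto simp: in_hom_iff)

declare diag_in_hom [unfolded hom_def, simplified, simp]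
  codiag_in_hom [unfolded hom_def, simplified, simp]
  p1_diag [simp] p2_diag [simp] codiag_i1 [simp] codiag_i2 [simp]
  p1_diag [THEN comp_eq_comp_right, simp] p2_diag [THEN comp_eq_comp_right, simp]
  codiag_i1 [THEN comp_eq_comp_right, simp] codiag_i2 [THEN comp_eq_comp_right, simp]

context
  fixes f g A1 A2 B1 B2
  assumes f: "f \<in> hom C A1 B1" and g: "g \<in> hom C A2 B2"
begin

lemma bp_map_in_hom: "bp_map C f g \<in> hom C (A1 \<oplus> A2) (B1 \<oplus> B2)"
  and p1_bp_map: "p1 B1 B2 \<cdot> bp_map C f g = f \<cdot> p1 A1 A2"
  and p2_bp_map: "p2 B1 B2 \<cdot> bp_map C f g = g \<cdot> p2 A1 A2"
  using theI'[OF tuple_ex1[of B1 B2 "f \<cdot> p1 A1 A2" "A1 \<oplus> A2" "g \<cdot> p2 A1 A2"]] f g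
  unfolding bp_map_def Let_def by (auto simp: in_hom_iff)

lemma bp_map_i1: "bp_map C f g \<cdot> i1 A1 A2 = i1 B1 B2 \<cdot> f"
proof (rule tuple_eqI)
  show "p1 B1 B2 \<cdot> bp_map C f g \<cdot> i1 A1 A2 = p1 B1 B2 \<cdot> i1 B1 B2 \<cdot> f"
    using f g bp_map_in_hom by (simp add: in_hom_iff comp_eq_comp_right[OF p1_bp_map])
  show "p2 B1 B2 \<cdot> bp_map C f g \<cdot> i1 A1 A2 = p2 B1 B2 \<cdot> i1 B1 B2 \<cdot> f"
    using f g bp_map_in_hom by (simp add: in_hom_iff comp_eq_comp_right[OF p2_bp_map])
qed (use f g bp_map_in_hom in \<open>auto simp: in_hom_iff\<close>)

lemma bp_map_i2: "bp_map C f g \<cdot> i2 A1 A2 = i2 B1 B2 \<cdot> g"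
proof (rule tuple_eqI)
  show "p1 B1 B2 \<cdot> bp_map C f g \<cdot> i2 A1 A2 = p1 B1 B2 \<cdot> i2 B1 B2 \<cdot> g"
    using f g bp_map_in_hom by (simp add: in_hom_iff comp_eq_comp_right[OF p1_bp_map])
  show "p2 B1 B2 \<cdot> bp_map C f g \<cdot> i2 A1 A2 = p2 B1 B2 \<cdot> i2 B1 B2 \<cdot> g"
    using f g bp_map_in_hom by (simp add: in_hom_iff comp_eq_comp_right[OF p2_bp_map])
qed (use f g bp_map_in_hom in \<open>auto simp: in_hom_iff\<close>)

end

lemma plus_in_hom: "f \<in> hom C A B \<Longrightarrow> g \<in> hom C A B \<Longrightarrow> f +\<^sub>C g \<in> hom C A B"
  using bp_map_in_hom[of f A B g A B] by (auto simp: cplus_def in_hom_iff)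

lemma plus_eq_codiag_comp:
  assumes f: "f \<in> hom C A B" and g: "g \<in> hom C A B" and m: "m \<in> hom C A (B \<oplus> B)"
    and "p1 B B \<cdot> m = f" "p2 B B \<cdot> m = g"
  shows "f +\<^sub>C g = \<nabla> B \<cdot> m"
proof -
  have "bp_map C f g \<cdot> \<Delta> A = m"
  proof (rule tuple_eqI)
    show "p1 B B \<cdot> bp_map C f g \<cdot> \<Delta> A = p1 B B \<cdot> m"
      using assms bp_map_in_hom[OF f g]
      by (simp add: in_hom_iff comp_eq_comp_right[OF p1_bp_map[OF f g]])
    show "p2 B B \<cdot> bp_map C f g \<cdot> \<Delta> A = p2 B B \<cdot> m"
      using assms bp_map_in_hom[OF f g]
      by (simp add: in_hom_iff comp_eq_comp_right[OF p2_bp_map[OF f g]])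
  qed (use assms bp_map_in_hom[OF f g] in \<open>auto simp: in_hom_iff\<close>)
  then show ?thesis
    using f by (simp add: cplus_def in_hom_iff)
qed

lemma plus_eq_comp_diag:
  assumes f: "f \<in> hom C A B" and g: "g \<in> hom C A B" and n: "n \<in> hom C (A \<oplus> A) B"
    and "n \<cdot> i1 A A = f" "n \<cdot> i2 A A = g"
  shows "f +\<^sub>C g = n \<cdot> \<Delta> A"
proof -
  have "\<nabla> B \<cdot> bp_map C f g = n"
  proof (rule cotuple_eqI)
    show "(\<nabla> B \<cdot> bp_map C f g) \<cdot> i1 A A = n \<cdot> i1 A A"
      using assms bp_map_in_hom[OF f g] by (simp add: in_hom_iff bp_map_i1[OF f g])
    show "(\<nabla> B \<cdot> bp_map C f g) \<cdot> i2 A A = n \<cdot> i2 A A"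
      using assms bp_map_in_hom[OF f g] by (simp add: in_hom_iff bp_map_i2[OF f g])
  qed (use assms bp_map_in_hom[OF f g] in \<open>auto simp: in_hom_iff\<close>)
  then show ?thesis
    using assms bp_map_in_hom[OF f g] by (auto simp: cplus_def in_hom_iff)
qed

lemma plus_zero_right [simp]: "f \<in> hom C A B \<Longrightarrow> f +\<^sub>C \<zero>\<^bsub>A,B\<^esub> = f"
  by (subst plus_eq_codiag_comp[where m = "i1 B B \<cdot> f"]) (auto simp: in_hom_iff)

lemma plus_zero_left [simp]: "f \<in> hom C A B \<Longrightarrow> \<zero>\<^bsub>A,B\<^esub> +\<^sub>C f = f"
  by (subst plus_eq_codiag_comp[where m = "i2 B B \<cdot> f"]) (auto simp: in_hom_iff)

lemma plus_comp:
  assumes f: "f \<in> hom C A B" and g: "g \<in> hom C A B" and k: "k \<in> hom C W A"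
  shows "(f +\<^sub>C g) \<cdot> k = f \<cdot> k +\<^sub>C g \<cdot> k"
proof -
  obtain m where m: "m \<in> hom C A (B \<oplus> B)" "p1 B B \<cdot> m = f" "p2 B B \<cdot> m = g"
    using tuple_ex1[of B B f A g] f g in_hom_Obj by blast
  have "(f +\<^sub>C g) \<cdot> k = \<nabla> B \<cdot> m \<cdot> k"
    using plus_eq_codiag_comp[OF f g m] m f k by (simp add: in_hom_iff)
  also have "\<dots> = f \<cdot> k +\<^sub>C g \<cdot> k"
  proof (rule plus_eq_codiag_comp[symmetric])
    show "p1 B B \<cdot> m \<cdot> k = f \<cdot> k" "p2 B B \<cdot> m \<cdot> k = g \<cdot> k"
      using m f k by (simp_all add: in_hom_iff flip: m(2,3))
  qed (use m f g k comp_in_hom in blast)+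
  finally show ?thesis .
qed

lemma comp_plus:
  assumes f: "f \<in> hom C A B" and g: "g \<in> hom C A B" and h: "h \<in> hom C B D"
  shows "h \<cdot> (f +\<^sub>C g) = h \<cdot> f +\<^sub>C h \<cdot> g"
proof -
  obtain n where n: "n \<in> hom C (A \<oplus> A) B" "n \<cdot> i1 A A = f" "n \<cdot> i2 A A = g"
    using cotuple_ex1[of A A f B g] f g in_hom_Obj by blast
  have "h \<cdot> (f +\<^sub>C g) = (h \<cdot> n) \<cdot> \<Delta> A"
    using plus_eq_comp_diag[OF f g n] n f h by (simp add: in_hom_iff)
  also have "\<dots> = h \<cdot> f +\<^sub>C h \<cdot> g"
  proof (rule plus_eq_comp_diag[symmetric])
    show "(h \<cdot> n) \<cdot> i1 A A = h \<cdot> f" "(h \<cdot> n) \<cdot> i2 A A = h \<cdot> g"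
      using n f h by (simp_all add: in_hom_iff flip: n(2,3))
  qed (use n f g h comp_in_hom in blast)+
  finally show ?thesis .
qed

text \<open>The Eckmann-Hilton argument: the interchange law together with the common unit
  \<zero> forces the addition to be commutative and associative.\<close>

lemma plus_interchange:
  assumes a: "a \<in> hom C A B" and b: "b \<in> hom C A B" and c: "c \<in> hom C A B" and d: "d \<in> hom C A B"
  shows "(a +\<^sub>C b) +\<^sub>C (c +\<^sub>C d) = (a +\<^sub>C c) +\<^sub>C (b +\<^sub>C d)"
proof -
  have B: "B \<in> Obj C"
    using a in_hom_Obj by blast
  obtain m1 where m1: "m1 \<in> hom C A (B \<oplus> B)" "p1 B B \<cdot> m1 = a" "p2 B B \<cdot> m1 = c"
    using tuple_ex1[of B B a A c] a c B by blast
  obtain m2 where m2: "m2 \<in> hom C A (B \<oplus> B)" "p1 B B \<cdot> m2 = b" "p2 B B \<cdot> m2 = d"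
    using tuple_ex1[of B B b A d] b d B by blast
  have "(a +\<^sub>C b) +\<^sub>C (c +\<^sub>C d) = \<nabla> B \<cdot> (m1 +\<^sub>C m2)"
  proof (rule plus_eq_codiag_comp)
    show "p1 B B \<cdot> (m1 +\<^sub>C m2) = a +\<^sub>C b"
      using comp_plus[OF m1(1) m2(1) p1_in_hom[OF B B]] m1 m2 by simp
    show "p2 B B \<cdot> (m1 +\<^sub>C m2) = c +\<^sub>C d"
      using comp_plus[OF m1(1) m2(1) p2_in_hom[OF B B]] m1 m2 by simp
  qed (use assms m1 m2 plus_in_hom in blast)+
  also have "\<dots> = \<nabla> B \<cdot> m1 +\<^sub>C \<nabla> B \<cdot> m2"
    using comp_plus[OF m1(1) m2(1) codiag_in_hom[OF B]] .
  also have "\<dots> = (a +\<^sub>C c) +\<^sub>C (b +\<^sub>C d)"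
    using plus_eq_codiag_comp[OF a c m1] plus_eq_codiag_comp[OF b d m2] by simp
  finally show ?thesis .
qed

lemma plus_commute:
  assumes f: "f \<in> hom C A B" and g: "g \<in> hom C A B"
  shows "f +\<^sub>C g = g +\<^sub>C f"
proof -
  have z: "\<zero>\<^bsub>A,B\<^esub> \<in> hom C A B"
    using f in_hom_Obj zero_mor_in_hom by blast
  show ?thesis
    using plus_interchange[OF z f g z] f g by simp
qed

lemma plus_assoc:
  assumes f: "f \<in> hom C A B" and g: "g \<in> hom C A B" and h: "h \<in> hom C A B"
  shows "(f +\<^sub>C g) +\<^sub>C h = f +\<^sub>C (g +\<^sub>C h)"
proof -
  have z: "\<zero>\<^bsub>A,B\<^esub> \<in> hom C A B"
    using f in_hom_Obj zero_mor_in_hom by blast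
  show ?thesis
    using plus_interchange[OF f g z h] f g h by simp
qed

lemma id_bp_eq_plus:
  assumes A: "A \<in> Obj C" and B: "B \<in> Obj C"
  shows "i1 A B \<cdot> p1 A B +\<^sub>C i2 A B \<cdot> p2 A B = Id C (A \<oplus> B)"
proof -
  have i1p1: "i1 A B \<cdot> p1 A B \<in> hom C (A \<oplus> B) (A \<oplus> B)"
    and i2p2: "i2 A B \<cdot> p2 A B \<in> hom C (A \<oplus> B) (A \<oplus> B)"
    using A B by (simp_all add: in_hom_iff)
  show ?thesis
  proof (rule tuple_eqI[OF A B, where Y = "A \<oplus> B"])
    show "p1 A B \<cdot> (i1 A B \<cdot> p1 A B +\<^sub>C i2 A B \<cdot> p2 A B) = p1 A B \<cdot> Id C (A \<oplus> B)"
      using comp_plus[OF i1p1 i2p2 p1_in_hom[OF A B]] A B p1_in_hom[OF A B] by simp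
    show "p2 A B \<cdot> (i1 A B \<cdot> p1 A B +\<^sub>C i2 A B \<cdot> p2 A B) = p2 A B \<cdot> Id C (A \<oplus> B)"
      using comp_plus[OF i1p1 i2p2 p2_in_hom[OF A B]] A B p2_in_hom[OF A B] by simp
  qed (use A B plus_in_hom[OF i1p1 i2p2] in \<open>simp_all add: in_hom_iff\<close>)
qed

lemma comp_bp_expand:
  assumes A: "A \<in> Obj C" and B: "B \<in> Obj C"
    and f: "f \<in> hom C (A \<oplus> B) Y" and m: "m \<in> hom C W (A \<oplus> B)"
  shows "f \<cdot> m = (f \<cdot> i1 A B) \<cdot> (p1 A B \<cdot> m) +\<^sub>C (f \<cdot> i2 A B) \<cdot> (p2 A B \<cdot> m)"
proof -
  have i1p1: "i1 A B \<cdot> p1 A B \<in> hom C (A \<oplus> B) (A \<oplus> B)"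
    and i2p2: "i2 A B \<cdot> p2 A B \<in> hom C (A \<oplus> B) (A \<oplus> B)"
    and i1p1m: "i1 A B \<cdot> p1 A B \<cdot> m \<in> hom C W (A \<oplus> B)"
    and i2p2m: "i2 A B \<cdot> p2 A B \<cdot> m \<in> hom C W (A \<oplus> B)"
    using A B m by (simp_all add: in_hom_iff)
  have "f \<cdot> m = f \<cdot> (i1 A B \<cdot> p1 A B +\<^sub>C i2 A B \<cdot> p2 A B) \<cdot> m"
    using id_bp_eq_plus[OF A B] f m by (simp add: in_hom_iff)
  also have "\<dots> = f \<cdot> (i1 A B \<cdot> p1 A B \<cdot> m +\<^sub>C i2 A B \<cdot> p2 A B \<cdot> m)"
    using plus_comp[OF i1p1 i2p2 m] A B m by (simp add: in_hom_iff)
  also have "\<dots> = f \<cdot> i1 A B \<cdot> p1 A B \<cdot> m +\<^sub>C f \<cdot> i2 A B \<cdot> p2 A B \<cdot> m"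
    using comp_plus[OF i1p1m i2p2m f] .
  finally show ?thesis
    using A B f m by (simp add: in_hom_iff)
qed

lemma diag_factors_iff:
  assumes X: "X \<in> Obj C" and m: "m \<in> hom C W (X \<oplus> X)"
  shows "(\<exists>!u. u \<in> hom C W X \<and> \<Delta> X \<cdot> u = m) \<longleftrightarrow> p1 X X \<cdot> m = p2 X X \<cdot> m"
proof
  assume "\<exists>!u. u \<in> hom C W X \<and> \<Delta> X \<cdot> u = m"
  then obtain u where u: "u \<in> hom C W X" "\<Delta> X \<cdot> u = m"
    by blast
  have "p1 X X \<cdot> \<Delta> X \<cdot> u = p2 X X \<cdot> \<Delta> X \<cdot> u"
    using X u(1) by (simp add: in_hom_iff)
  then show "p1 X X \<cdot> m = p2 X X \<cdot> m"
    unfolding u(2) .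
next
  assume p: "p1 X X \<cdot> m = p2 X X \<cdot> m"
  have "p1 X X \<cdot> m \<in> hom C W X"
    using X m by (simp add: in_hom_iff)
  moreover have "\<Delta> X \<cdot> p1 X X \<cdot> m = m"
  proof (rule tuple_eqI[OF X X, where Y = W])
    show "p2 X X \<cdot> \<Delta> X \<cdot> p1 X X \<cdot> m = p2 X X \<cdot> m"
      using X m p by (simp add: in_hom_iff)
  qed (use X m in \<open>simp_all add: in_hom_iff\<close>)
  moreover have "u = p1 X X \<cdot> m" if "u \<in> hom C W X" "\<Delta> X \<cdot> u = m" for u
    using that X by (auto simp: in_hom_iff)
  ultimately show "\<exists>!u. u \<in> hom C W X \<and> \<Delta> X \<cdot> u = m"
    by blast
qed

lemma kills_factor_through_diag_iff:
  assumes X: "X \<in> Obj C" and f: "f \<in> hom C (X \<oplus> X) Y"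
  shows "(\<forall>w\<in>Obj C. \<forall>m\<in>hom C w (X \<oplus> X).
      f \<cdot> m = \<zero>\<^bsub>X \<oplus> X,Y\<^esub> \<cdot> m \<longrightarrow> (\<exists>!u. u \<in> hom C w X \<and> \<Delta> X \<cdot> u = m)) \<longleftrightarrow>
    (\<forall>W x y. x \<in> hom C W X \<longrightarrow> y \<in> hom C W X \<longrightarrow>
       (f \<cdot> i1 X X) \<cdot> x +\<^sub>C (f \<cdot> i2 X X) \<cdot> y = \<zero>\<^bsub>W,Y\<^esub> \<longrightarrow> x = y)"
    (is "?factors \<longleftrightarrow> ?cancel")
proof -
  have kills_iff: "f \<cdot> m = \<zero>\<^bsub>X \<oplus> X,Y\<^esub> \<cdot> m \<longleftrightarrow>
      (f \<cdot> i1 X X) \<cdot> (p1 X X \<cdot> m) +\<^sub>C (f \<cdot> i2 X X) \<cdot> (p2 X X \<cdot> m) = \<zero>\<^bsub>W,Y\<^esub>"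
    if "m \<in> hom C W (X \<oplus> X)" for m W
    using comp_bp_expand[OF X X f that] that f by (simp add: in_hom_iff)
  show ?thesis
  proof
    assume factors: ?factors
    show ?cancel
    proof (intro allI impI)
      fix W x y
      assume x: "x \<in> hom C W X" and y: "y \<in> hom C W X"
        and "(f \<cdot> i1 X X) \<cdot> x +\<^sub>C (f \<cdot> i2 X X) \<cdot> y = \<zero>\<^bsub>W,Y\<^esub>"
      moreover obtain m where m: "m \<in> hom C W (X \<oplus> X)" "p1 X X \<cdot> m = x" "p2 X X \<cdot> m = y"
        using tuple_ex1[OF X X x y] by blast
      ultimately show "x = y"
        using factors kills_iff[OF m(1)] diag_factors_iff[OF X m(1)] in_hom_Obj by blast
    qed
  next
    assume cancel: ?cancel
    show ?factors
    proof (intro ballI impI)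
      fix w m
      assume m: "m \<in> hom C w (X \<oplus> X)" and "f \<cdot> m = \<zero>\<^bsub>X \<oplus> X,Y\<^esub> \<cdot> m"
      moreover have "p1 X X \<cdot> m \<in> hom C w X" "p2 X X \<cdot> m \<in> hom C w X"
        using X m by (simp_all add: in_hom_iff)
      ultimately show "\<exists>!u. u \<in> hom C w X \<and> \<Delta> X \<cdot> u = m"
        using cancel kills_iff[OF m] diag_factors_iff[OF X m] by blast
    qed
  qed
qed

lemma is_kernel_diag_iff:
  assumes X: "X \<in> Obj C" and f: "f \<in> hom C (X \<oplus> X) Y"
  shows "is_kernel C (\<Delta> X) f \<longleftrightarrow> f \<cdot> i1 X X +\<^sub>C f \<cdot> i2 X X = \<zero>\<^bsub>X,Y\<^esub> \<and>
    (\<forall>W x y. x \<in> hom C W X \<longrightarrow> y \<in> hom C W X \<longrightarrow>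
       (f \<cdot> i1 X X) \<cdot> x +\<^sub>C (f \<cdot> i2 X X) \<cdot> y = \<zero>\<^bsub>W,Y\<^esub> \<longrightarrow> x = y)"
proof -
  have a: "f \<cdot> i1 X X \<in> hom C X Y" and b: "f \<cdot> i2 X X \<in> hom C X Y"
    using X f by (simp_all add: in_hom_iff)
  have "f \<cdot> \<Delta> X = \<zero>\<^bsub>X \<oplus> X,Y\<^esub> \<cdot> \<Delta> X \<longleftrightarrow> f \<cdot> i1 X X +\<^sub>C f \<cdot> i2 X X = \<zero>\<^bsub>X,Y\<^esub>"
    using plus_eq_comp_diag[OF a b f refl refl] X f by (simp add: in_hom_iff)
  moreover have "Dom C f = X \<oplus> X" "Cod C f = Y" "f \<in> Arr C"
    and "Dom C (\<Delta> X) = X" "Cod C (\<Delta> X) = X \<oplus> X" "\<Delta> X \<in> Arr C"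
    using X f by (simp_all add: in_hom_iff)
  ultimately show ?thesis
    using kills_factor_through_diag_iff[OF X f] unfolding is_kernel_def by (simp only: simp_thms)
qed

lemma abelian_obj_iff:
  "abelian_obj C X \<longleftrightarrow> X \<in> Obj C \<and> (\<exists>g \<in> hom C X X. g +\<^sub>C Id C X = \<zero>\<^bsub>X,X\<^esub>)"
  unfolding abelian_obj_def using plus_commute Id_in_hom by metis

lemma eq_of_plus_neg_id_comp:
  assumes g: "g \<in> hom C X X" and neg: "g +\<^sub>C Id C X = \<zero>\<^bsub>X,X\<^esub>"
    and x: "x \<in> hom C W X" and y: "y \<in> hom C W X" and sum: "x +\<^sub>C g \<cdot> y = \<zero>\<^bsub>W,X\<^esub>"
  shows "x = y"
proof -
  have X: "X \<in> Obj C" and gy: "g \<cdot> y \<in> hom C W X"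
    using g y by (simp_all add: in_hom_iff)
  have "x = x +\<^sub>C (g +\<^sub>C Id C X) \<cdot> y"
    using neg x y by (simp add: in_hom_iff)
  also have "\<dots> = (x +\<^sub>C g \<cdot> y) +\<^sub>C y"
    using plus_comp[OF g Id_in_hom[OF X] y] plus_assoc[OF x gy y] y by (simp add: in_hom_iff)
  also have "\<dots> = y"
    using sum y by simp
  finally show ?thesis .
qed

lemma neg_id_of_cancelling_section:
  assumes a: "a \<in> hom C X Y" and b: "b \<in> hom C X Y"
    and s1: "s1 \<in> hom C Y X" and s2: "s2 \<in> hom C Y X"
    and right_inverse: "a \<cdot> s1 +\<^sub>C b \<cdot> s2 = Id C Y" and sum: "a +\<^sub>C b = \<zero>\<^bsub>X,Y\<^esub>"
    and cancel: "\<And>x y. x \<in> hom C X X \<Longrightarrow> y \<in> hom C X X \<Longrightarrow>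
      a \<cdot> x +\<^sub>C b \<cdot> y = \<zero>\<^bsub>X,Y\<^esub> \<Longrightarrow> x = y"
  shows "(s2 \<cdot> a +\<^sub>C s1 \<cdot> b) +\<^sub>C Id C X = \<zero>\<^bsub>X,X\<^esub>"
proof -
  have I: "Id C X \<in> hom C X X"
    and s1a: "s1 \<cdot> a \<in> hom C X X" and s2a: "s2 \<cdot> a \<in> hom C X X" and s1b: "s1 \<cdot> b \<in> hom C X X"
    and as1: "a \<cdot> s1 \<in> hom C Y Y" and bs2: "b \<cdot> s2 \<in> hom C Y Y"
    using a b s1 s2 by (simp_all add: in_hom_iff)
  have as1a: "a \<cdot> s1 \<cdot> a \<in> hom C X Y" and bs2a: "b \<cdot> s2 \<cdot> a \<in> hom C X Y"
    using a b s1 s2 by (simp_all add: in_hom_iff)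
  have "a \<cdot> (s1 \<cdot> a) +\<^sub>C b \<cdot> (s2 \<cdot> a +\<^sub>C Id C X) = (a \<cdot> s1 \<cdot> a +\<^sub>C b \<cdot> s2 \<cdot> a) +\<^sub>C b"
    using comp_plus[OF s2a I b] plus_assoc[OF as1a bs2a b] b by (simp add: in_hom_iff)
  also have "\<dots> = (a \<cdot> s1 +\<^sub>C b \<cdot> s2) \<cdot> a +\<^sub>C b"
    using plus_comp[OF as1 bs2 a] a b s1 s2 by (simp add: in_hom_iff)
  also have "\<dots> = \<zero>\<^bsub>X,Y\<^esub>"
    using right_inverse sum a by (simp add: in_hom_iff)
  finally have "s1 \<cdot> a = s2 \<cdot> a +\<^sub>C Id C X"
    using cancel s1a plus_in_hom[OF s2a I] by blast
  then have "(s2 \<cdot> a +\<^sub>C s1 \<cdot> b) +\<^sub>C Id C X = s1 \<cdot> a +\<^sub>C s1 \<cdot> b"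
    using plus_assoc[OF s2a s1b I] plus_assoc[OF s2a I s1b] plus_commute[OF s1b I] by simp
  also have "\<dots> = \<zero>\<^bsub>X,X\<^esub>"
    using comp_plus[OF a b s1] sum s1 by (simp add: in_hom_iff)
  finally show ?thesis .
qed

lemma split_epi_kernel_diag_if_abelian_obj:
  assumes "abelian_obj C X"
  shows "\<exists>f. split_epi C f \<and> is_kernel C (\<Delta> X) f"
proof -
  obtain g where X: "X \<in> Obj C" and g: "g \<in> hom C X X" and neg: "g +\<^sub>C Id C X = \<zero>\<^bsub>X,X\<^esub>"
    using assms unfolding abelian_obj_iff by blast
  obtain f where f: "f \<in> hom C (X \<oplus> X) X" "f \<cdot> i1 X X = Id C X" "f \<cdot> i2 X X = g"
    using cotuple_ex1[OF X X Id_in_hom[OF X] g] by blast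
  have "split_epi C f"
    unfolding split_epi_def using f X by (auto simp: in_hom_iff intro!: bexI[of _ "i1 X X"])
  moreover have "f \<cdot> i1 X X +\<^sub>C f \<cdot> i2 X X = \<zero>\<^bsub>X,X\<^esub>"
    using f neg plus_commute[OF g Id_in_hom[OF X]] by simp
  moreover have "x = y" if "x \<in> hom C W X" "y \<in> hom C W X"
    and "(f \<cdot> i1 X X) \<cdot> x +\<^sub>C (f \<cdot> i2 X X) \<cdot> y = \<zero>\<^bsub>W,X\<^esub>" for W x y
    using eq_of_plus_neg_id_comp[OF g neg that(1,2)] that f by (simp add: in_hom_iff)
  ultimately show ?thesis
    using is_kernel_diag_iff[OF X f(1)] by blast
qed

lemma abelian_obj_if_split_epi_kernel_diag:
  assumes X: "X \<in> Obj C" and epi: "split_epi C f" and kernel: "is_kernel C (\<Delta> X) f"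
  shows "abelian_obj C X"
proof -
  have "f \<in> Arr C" "Dom C f = X \<oplus> X"
    using kernel diag_in_hom[OF X] unfolding is_kernel_def hom_def by auto
  then obtain Y where f: "f \<in> hom C (X \<oplus> X) Y"
    unfolding hom_def by blast
  then obtain s where s: "s \<in> hom C Y (X \<oplus> X)" "f \<cdot> s = Id C Y"
    using epi unfolding split_epi_def hom_def by auto
  define a b s1 s2
    where "a = f \<cdot> i1 X X" and "b = f \<cdot> i2 X X" and "s1 = p1 X X \<cdot> s" and "s2 = p2 X X \<cdot> s"
  have a: "a \<in> hom C X Y" and b: "b \<in> hom C X Y" and s1: "s1 \<in> hom C Y X" and s2: "s2 \<in> hom C Y X"
    using X f s unfolding a_def b_def s1_def s2_def by (simp_all add: in_hom_iff)
  have "a \<cdot> s1 +\<^sub>C b \<cdot> s2 = Id C Y"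
    using comp_bp_expand[OF X X f s(1)] s(2) unfolding a_def b_def s1_def s2_def by simp
  moreover have "a +\<^sub>C b = \<zero>\<^bsub>X,Y\<^esub>"
    and "\<And>x y. x \<in> hom C X X \<Longrightarrow> y \<in> hom C X X \<Longrightarrow> a \<cdot> x +\<^sub>C b \<cdot> y = \<zero>\<^bsub>X,Y\<^esub> \<Longrightarrow> x = y"
    using kernel is_kernel_diag_iff[OF X f] unfolding a_def b_def by blast+
  ultimately have "(s2 \<cdot> a +\<^sub>C s1 \<cdot> b) +\<^sub>C Id C X = \<zero>\<^bsub>X,X\<^esub>"
    by (rule neg_id_of_cancelling_section[OF a b s1 s2])
  moreover have "s2 \<cdot> a +\<^sub>C s1 \<cdot> b \<in> hom C X X"
    using a b s1 s2 by (intro plus_in_hom) (simp_all add: in_hom_iff)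
  ultimately show ?thesis
    using X unfolding abelian_obj_iff by blast
qed

end

theorem theorem3p3:
  fixes C :: "('o, 'a) cat" and X :: 'o
  assumes "has_finite_biproducts C" and "X \<in> Obj C"
  shows "abelian_obj C X \<longleftrightarrow> (\<exists>f. split_epi C f \<and> is_kernel C (diag C X) f)"
proof -
  interpret biproduct_category C
    by unfold_locales (rule assms(1))
  show ?thesis
    using split_epi_kernel_diag_if_abelian_obj abelian_obj_if_split_epi_kernel_diag assms(2)
    by blast
qed

end
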